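(* Let $K=(\mathbf{k}_1,\dots,\mathbf{k}_6)\in(\mathbb{R}^2)^6$ be a 3-RPR configuration whose base anchor points $\mathbf{k}_1,\mathbf{k}_2,\mathbf{k}_3\in\mathbb{R}^2$ are fixed and whose platform anchor points are $\mathbf{k}_j=\mathbf{R}\mathbf{p}_j+\mathbf{t}$ ($j=4,5,6$) for fixed $\mathbf{p}_4,\mathbf{p}_5,\mathbf{p}_6\in\mathbb{R}^2$ and a pose $(\mathbf{R},\mathbf{t})$ with $\mathbf{R}\in SO(2)$, $\mathbf{t}\in\mathbb{R}^2$. Let $D$ be either $D^{\blacktriangle}_{\vartriangle}$ or $D^{\vartriangle}_{\vartriangle}$. If $K'=(\mathbf{k}'_1,\dots,\mathbf{k}'_6)$ is a closest configuration to $K$ on the collinearity variety $C_B=0$, i.e. a global minimizer of $D(K,K')$ over all $K'\in\mathbb{R}^{12}$ with $C_B(K')=0$, then $\mathbf{k}'_1,\mathbf{k}'_2,\mathbf{k}'_3$ are the pedal points (orthogonal projections) of $\mathbf{k}_1,\mathbf{k}_2,\mathbf{k}_3$ on the line of regression of $\mathbf{k}_1,\mathbf{k}_2,\mathbf{k}_3$. Moreover, the distance $\min\{D(K,K'):C_B(K')=0\}$ depends only on the geometry of the manipulator, i.e. it is independent of the pose $(\mathbf{R},\mathbf{t})$.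
   Context: A configuration is $K'=(\mathbf{k}'_1,\dots,\mathbf{k}'_6)$ with $\mathbf{k}'_i=(c_i,d_i)^T\in\mathbb{R}^2$, viewed as a point of $\mathbb{R}^{12}$. For indices $i,j$ define the segment distance $d(\vert_{ij},\vert'_{ij})^2=\frac13\big[\|\mathbf{k}_i-\mathbf{k}'_i\|^2+\|\mathbf{k}_j-\mathbf{k}'_j\|^2+(\mathbf{k}_i-\mathbf{k}'_i)^T(\mathbf{k}_j-\mathbf{k}'_j)\big]$ and for $\{i,j,k\}$ the triangle distance $d(\blacktriangle_{ijk},\blacktriangle'_{ijk})^2=\frac16\big[\sum_{x=i,j,k}\|\mathbf{k}_x-\mathbf{k}'_x\|^2+(\mathbf{k}_i-\mathbf{k}'_i)^T(\mathbf{k}_k-\mathbf{k}'_k)+(\mathbf{k}_i-\mathbf{k}'_i)^T(\mathbf{k}_j-\mathbf{k}'_j)+(\mathbf{k}_k-\mathbf{k}'_k)^T(\mathbf{k}_j-\mathbf{k}'_j)\big]$. Then $D^{\blacktriangle}_{\vartriangle}(K,K')^2=\frac17\big[\sum_{(i,j)\in I_3}d(\vert_{ij},\vert'_{ij})^2+d(\blacktriangle_{456},\blacktriangle'_{456})^2\big]$ with $I_3=\{(1,4),(2,5),(3,6),(1,2),(2,3),(1,3)\}$, and $D^{\vartriangle}_{\vartriangle}(K,K')^2=\frac19\sum_{(i,j)\in I_4}d(\vert_{ij},\vert'_{ij})^2$ with $I_4=\{(1,2),(2,3),(1,3),(1,4),(2,5),(3,6),(4,5),(5,6),(4,6)\}$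 (distances are the nonnegative square roots). The collinearity polynomial of the base is $C_B(K')=\det\begin{pmatrix}1&1&1\\ c_1&c_2&c_3\\ d_1&d_2&d_3\end{pmatrix}$. The line of regression of three points is the line minimizing the sum of squared orthogonal distances to these points; the pedal point of a point on a line is its orthogonal projection onto that line. *)

theory Defs
  imports "HOL-Analysis.Analysis"
begin

text \<open>Points of the plane are vectors in real^2; a configuration
  K = (k_1,...,k_6) is a function from indices to points, only the
  indices 1..6 are used.\<close>

type_synonym point = "real ^ 2"
type_synonym config = "nat \<Rightarrow> real ^ 2"

definition seg_dist2 :: "config \<Rightarrow> config \<Rightarrow> nat \<Rightarrow> nat \<Rightarrow> real" where
  "seg_dist2 K K' i j = (1/3) * ((norm (K i - K' i))\<^sup>2 + (norm (K j - K' j))\<^sup>2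
      + (K i - K' i) \<bullet> (K j - K' j))"

definition tri_dist2 :: "config \<Rightarrow> config \<Rightarrow> nat \<Rightarrow> nat \<Rightarrow> nat \<Rightarrow> real" where
  "tri_dist2 K K' i j k = (1/6) * ((norm (K i - K' i))\<^sup>2 + (norm (K j - K' j))\<^sup>2
      + (norm (K k - K' k))\<^sup>2
      + (K i - K' i) \<bullet> (K k - K' k) + (K i - K' i) \<bullet> (K j - K' j)
      + (K k - K' k) \<bullet> (K j - K' j))"

definition I3 :: "(nat \<times> nat) list" where
  "I3 = [(1,4),(2,5),(3,6),(1,2),(2,3),(1,3)]"

definition I4 :: "(nat \<times> nat) list" where
  "I4 = [(1,2),(2,3),(1,3),(1,4),(2,5),(3,6),(4,5),(5,6),(4,6)]"

definition D_tri :: "config \<Rightarrow> config \<Rightarrow> real" where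
  "D_tri K K' = sqrt ((1/7) * ((\<Sum>(i,j)\<leftarrow>I3. seg_dist2 K K' i j) + tri_dist2 K K' 4 5 6))"

definition D_seg :: "config \<Rightarrow> config \<Rightarrow> real" where
  "D_seg K K' = sqrt ((1/9) * (\<Sum>(i,j)\<leftarrow>I4. seg_dist2 K K' i j))"

definition C_B :: "config \<Rightarrow> real" where
  "C_B K' = det (vector [vector [1, 1, 1],
                         vector [K' 1 $ 1, K' 2 $ 1, K' 3 $ 1],
                         vector [K' 1 $ 2, K' 2 $ 2, K' 3 $ 2]] :: real ^ 3 ^ 3)"

definition SO2 :: "(real ^ 2 ^ 2) set" where
  "SO2 = {R. orthogonal_matrix R \<and> det R = 1}"

definition rpr_config :: "config \<Rightarrow> config \<Rightarrow> real^2^2 \<Rightarrow> point \<Rightarrow> config" where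
  "rpr_config b p R t = (\<lambda>i. if i \<in> {1,2,3} then b i else R *v p i + t)"

definition line :: "point \<Rightarrow> point \<Rightarrow> point set" where
  "line a v = range (\<lambda>s. a + s *\<^sub>R v)"

definition is_regression_line :: "point \<Rightarrow> point \<Rightarrow> config \<Rightarrow> bool" where
  "is_regression_line a v q \<longleftrightarrow> v \<noteq> 0 \<and>
     (\<forall>c w. w \<noteq> 0 \<longrightarrow>
        (\<Sum>i\<in>{1,2,3::nat}. (infdist (q i) (line a v))\<^sup>2)
          \<le> (\<Sum>i\<in>{1,2,3::nat}. (infdist (q i) (line c w))\<^sup>2))"

definition pedal :: "point \<Rightarrow> point \<Rightarrow> point \<Rightarrow> point" where
  "pedal a v x = a + (((x - a) \<bullet> v) / (v \<bullet> v)) *\<^sub>R v"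

end

theory Submission
  imports Defs
begin

text \<open>
  Both distances are, in each coordinate, positive definite quadratic forms in the
  displacements e_i = k_i - k'_i, and C_B constrains only k'_1, k'_2, k'_3. Minimising over the
  free platform displacements (a Schur complement) leaves the reduced cost
  A * sum_i |e_i - e|^2 + C * |e|^2 of the base displacements, e their mean, with A, C > 0.
  If k'_1, k'_2, k'_3 lie on a line with normal n, the n-component of e_i - e equals that of
  k_i - g, g the centroid of k_1, k_2, k_3; so the reduced cost is at least A times the sum of
  squared distances of the k_i to the parallel line through g, with equality exactly when e = 0 and
  every e_i is normal to the line, i.e. at the pedal points. Minimising over the direction of the
  line yields the regression line.
\<close>

lemma infdist_eq_dist_if_nearest:
  fixes x p :: "'a::metric_space"
  assumes "p \<in> A" and "\<And>y. y \<in> A \<Longrightarrow> dist x p \<le> dist x y"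
  shows "infdist x A = dist x p"
proof (rule antisym)
  show "infdist x A \<le> dist x p" using assms(1) by (rule infdist_le)
  have "A \<noteq> {}" using assms(1) by auto
  then show "dist x p \<le> infdist x A"
    unfolding infdist_notempty[OF \<open>A \<noteq> {}\<close>] by (rule cINF_greatest) (rule assms(2))
qed

section \<open>Orthogonal decomposition in the plane\<close>

lemma inner_vec2: "(u::real^2) \<bullet> w = u$1 * w$1 + u$2 * w$2"
  by (simp add: inner_vec_def sum_2)

lemma vec2_eq_iff: "(u::real^2) = w \<longleftrightarrow> u$1 = w$1 \<and> u$2 = w$2"
  by (simp add: vec_eq_iff forall_2)

definition rot90 :: "real^2 \<Rightarrow> real^2" where
  "rot90 v = vector [- (v$2), v$1]"

lemma rot90_nth [simp]: "rot90 v $ 1 = - (v$2)" "rot90 v $ 2 = v$1"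
  by (simp_all add: rot90_def)

lemma inner_rot90_self [simp]: "v \<bullet> rot90 v = 0" "rot90 v \<bullet> v = 0"
  by (simp_all add: inner_vec2)

lemma inner_rot90_rot90 [simp]: "rot90 u \<bullet> rot90 v = u \<bullet> v"
  by (simp add: inner_vec2)

lemma rot90_rot90 [simp]: "rot90 (rot90 v) = - v"
  by (simp add: vec2_eq_iff)

lemma rot90_eq_0_iff [simp]: "rot90 v = 0 \<longleftrightarrow> v = 0"
  by (auto simp: vec2_eq_iff)

lemma vec2_decomp: "(n \<bullet> n) *\<^sub>R w = (w \<bullet> n) *\<^sub>R n + (w \<bullet> rot90 n) *\<^sub>R rot90 n"
  by (simp add: vec2_eq_iff inner_vec2 algebra_simps)

lemma inner_rot90_sq_sum: "(w \<bullet> n)\<^sup>2 + (w \<bullet> rot90 n)\<^sup>2 = (w \<bullet> w) * (n \<bullet> n)"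
  by (simp add: inner_vec2 power2_eq_square algebra_simps)

section \<open>Distance to a line and collinearity\<close>

lemma dist_line_point_sq:
  fixes x a v :: "real^2"
  assumes "v \<noteq> 0"
  shows "(dist x (a + s *\<^sub>R v))\<^sup>2 = (((x - a) \<bullet> rot90 v)\<^sup>2 + ((x - a) \<bullet> v - s * (v \<bullet> v))\<^sup>2) / (v \<bullet> v)"
proof -
  define w where "w = x - (a + s *\<^sub>R v)"
  have "w \<bullet> rot90 v = (x - a) \<bullet> rot90 v" "w \<bullet> v = (x - a) \<bullet> v - s * (v \<bullet> v)"
    unfolding w_def by (simp_all add: inner_diff_left inner_add_left)
  then have "(dist x (a + s *\<^sub>R v))\<^sup>2 * (v \<bullet> v) = ((x - a) \<bullet> rot90 v)\<^sup>2 + ((x - a) \<bullet> v - s * (v \<bullet> v))\<^sup>2"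
    using inner_rot90_sq_sum[of w v] by (simp add: dist_norm power2_norm_eq_inner w_def)
  then show ?thesis using assms by (simp add: field_simps)
qed

lemma infdist_line_sq:
  fixes x a v :: "real^2"
  assumes "v \<noteq> 0"
  shows "(infdist x (line a v))\<^sup>2 = ((x - a) \<bullet> rot90 v)\<^sup>2 / (v \<bullet> v)"
proof -
  have vv: "v \<bullet> v > 0" using assms by simp
  define s0 where "s0 = ((x - a) \<bullet> v) / (v \<bullet> v)"
  have min: "(dist x (a + s0 *\<^sub>R v))\<^sup>2 = ((x - a) \<bullet> rot90 v)\<^sup>2 / (v \<bullet> v)"
    using vv by (simp add: dist_line_point_sq[OF assms] s0_def)
  have "infdist x (line a v) = dist x (a + s0 *\<^sub>R v)"
  proof (rule infdist_eq_dist_if_nearest)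
    show "a + s0 *\<^sub>R v \<in> line a v" unfolding line_def by (rule rangeI)
    fix y assume "y \<in> line a v"
    then obtain s where "y = a + s *\<^sub>R v" by (auto simp: line_def)
    then have "(dist x y)\<^sup>2 = (((x - a) \<bullet> rot90 v)\<^sup>2 + ((x - a) \<bullet> v - s * (v \<bullet> v))\<^sup>2) / (v \<bullet> v)"
      by (simp add: dist_line_point_sq[OF assms])
    moreover have "((x - a) \<bullet> rot90 v)\<^sup>2 / (v \<bullet> v)
        \<le> (((x - a) \<bullet> rot90 v)\<^sup>2 + ((x - a) \<bullet> v - s * (v \<bullet> v))\<^sup>2) / (v \<bullet> v)"
      by (rule divide_right_mono) (use vv in auto)
    ultimately have "(dist x (a + s0 *\<^sub>R v))\<^sup>2 \<le> (dist x y)\<^sup>2"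
      unfolding min by linarith
    then show "dist x (a + s0 *\<^sub>R v) \<le> dist x y" by (rule power2_le_imp_le) simp_all
  qed
  then show ?thesis using min by simp
qed

lemma pedal_inner_normal: "v \<bullet> n = 0 \<Longrightarrow> pedal a v x \<bullet> n = a \<bullet> n"
  by (simp add: pedal_def inner_add_left)

lemma C_B_eq_inner_rot90: "C_B K = (K 3 - K 1) \<bullet> rot90 (K 2 - K 1)"
  unfolding C_B_def det_3 by (simp add: inner_vec2 algebra_simps)

lemma C_B_cong_base: "(\<And>i. i \<in> {1,2,3} \<Longrightarrow> K i = L i) \<Longrightarrow> C_B K = C_B L"
  by (simp add: C_B_eq_inner_rot90)

lemma inner_rot90_eq_0_if_common_normal:
  fixes u w n :: "real^2"
  assumes "n \<noteq> 0" "u \<bullet> n = 0" "w \<bullet> n = 0"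
  shows "w \<bullet> rot90 u = 0"
proof -
  have "n$1 * (w \<bullet> rot90 u) = 0" "n$2 * (w \<bullet> rot90 u) = 0"
    using assms(2,3) unfolding inner_vec2 by (simp_all, algebra+)
  then show ?thesis using assms(1) by (auto simp: vec2_eq_iff)
qed

lemma C_B_eq_0_iff: "C_B K = 0 \<longleftrightarrow> (\<exists>n k. n \<noteq> 0 \<and> (\<forall>i\<in>{1,2,3}. K i \<bullet> n = k))"
proof
  assume "C_B K = 0"
  obtain d where d: "d \<noteq> 0" "(K 2 - K 1) \<bullet> rot90 d = 0" "(K 3 - K 1) \<bullet> rot90 d = 0"
  proof (cases "K 2 = K 1")
    case True
    show ?thesis
    proof (cases "K 3 = K 1")
      case True
      with \<open>K 2 = K 1\<close> show ?thesis by (intro that[of "axis 1 1"]) auto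
    qed (use \<open>K 2 = K 1\<close> in \<open>intro that[of "K 3 - K 1"], auto\<close>)
  qed (use \<open>C_B K = 0\<close> in \<open>intro that[of "K 2 - K 1"], auto simp: C_B_eq_inner_rot90\<close>)
  then have "\<forall>i\<in>{1,2,3}. K i \<bullet> rot90 d = K 1 \<bullet> rot90 d"
    by (auto simp: inner_diff_left)
  then show "\<exists>n k. n \<noteq> 0 \<and> (\<forall>i\<in>{1,2,3}. K i \<bullet> n = k)"
    using d(1) rot90_eq_0_iff by blast
next
  assume "\<exists>n k. n \<noteq> 0 \<and> (\<forall>i\<in>{1,2,3}. K i \<bullet> n = k)"
  then obtain n k where "n \<noteq> 0" "\<forall>i\<in>{1,2,3}. K i \<bullet> n = k" by blast
  then show "C_B K = 0"
    unfolding C_B_eq_inner_rot90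
    by (intro inner_rot90_eq_0_if_common_normal[of n]) (auto simp: inner_diff_left)
qed

section \<open>The line of regression\<close>

lemma sum_sq_dev_mean_le:
  fixes z :: "'a \<Rightarrow> real"
  assumes "finite S"
  shows "(\<Sum>i\<in>S. (z i - sum z S / card S)\<^sup>2) \<le> (\<Sum>i\<in>S. (z i - c)\<^sup>2)"
proof -
  define m where "m = sum z S / card S"
  have dev_sum: "(\<Sum>i\<in>S. z i - m) = 0"
    using assms by (cases "S = {}") (simp_all add: m_def sum_subtractf)
  have "(\<Sum>i\<in>S. (z i - c)\<^sup>2) = (\<Sum>i\<in>S. (z i - m)\<^sup>2 + 2 * (m - c) * (z i - m) + (m - c)\<^sup>2)"
    by (rule sum.cong) (simp_all add: power2_eq_square algebra_simps)
  also have "\<dots> = (\<Sum>i\<in>S. (z i - m)\<^sup>2) + card S * (m - c)\<^sup>2"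
    by (simp add: sum.distrib flip: sum_distrib_left add: dev_sum)
  finally show ?thesis unfolding m_def by simp
qed

definition centroid3 :: "config \<Rightarrow> point" where
  "centroid3 K = (1/3) *\<^sub>R (K 1 + K 2 + K 3)"

definition centroid_line_sqdist :: "config \<Rightarrow> point \<Rightarrow> real" where
  "centroid_line_sqdist K n = (\<Sum>i\<in>{1,2,3}. ((K i - centroid3 K) \<bullet> n)\<^sup>2) / (n \<bullet> n)"

lemma centroid_line_sqdist_le_sum_infdist:
  assumes "w \<noteq> 0"
  shows "centroid_line_sqdist K (rot90 w) \<le> (\<Sum>i\<in>{1,2,3}. (infdist (K i) (line c w))\<^sup>2)"
proof -
  define z where "z i = K i \<bullet> rot90 w" for i
  have "centroid_line_sqdist K (rot90 w) = (\<Sum>i\<in>{1,2,3}. (z i - sum z {1,2,3} / card {1,2,3::nat})\<^sup>2) / (w \<bullet> w)"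
    unfolding centroid_line_sqdist_def centroid3_def z_def
    by (simp add: inner_diff_left inner_add_left field_simps)
  also have "\<dots> \<le> (\<Sum>i\<in>{1,2,3}. (z i - c \<bullet> rot90 w)\<^sup>2) / (w \<bullet> w)"
    by (rule divide_right_mono[OF sum_sq_dev_mean_le]) simp_all
  also have "\<dots> = (\<Sum>i\<in>{1,2,3}. (infdist (K i) (line c w))\<^sup>2)"
    unfolding infdist_line_sq[OF assms] z_def by (simp add: inner_diff_left add_divide_distrib)
  finally show ?thesis .
qed

lemma sum_infdist_centroid_line:
  assumes "n \<noteq> 0"
  shows "(\<Sum>i\<in>{1,2,3}. (infdist (K i) (line (centroid3 K) (rot90 n)))\<^sup>2) = centroid_line_sqdist K n"
proof -
  have "rot90 n \<noteq> 0" using assms by simp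
  then show ?thesis
    unfolding infdist_line_sq[OF \<open>rot90 n \<noteq> 0\<close>] centroid_line_sqdist_def
    by (simp add: add_divide_distrib)
qed

lemma is_regression_line_centroid:
  assumes "n \<noteq> 0" and "\<And>m. m \<noteq> 0 \<Longrightarrow> centroid_line_sqdist K n \<le> centroid_line_sqdist K m"
  shows "is_regression_line (centroid3 K) (rot90 n) K"
  unfolding is_regression_line_def
proof (intro conjI allI impI)
  show "rot90 n \<noteq> 0" using assms(1) by simp
  fix c w :: point assume "w \<noteq> 0"
  then show "(\<Sum>i\<in>{1,2,3}. (infdist (K i) (line (centroid3 K) (rot90 n)))\<^sup>2)
      \<le> (\<Sum>i\<in>{1,2,3}. (infdist (K i) (line c w))\<^sup>2)"
    using assms(2)[of "rot90 w"] centroid_line_sqdist_le_sum_infdist[of w K c]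
      sum_infdist_centroid_line[OF assms(1), of K]
    by simp
qed

section \<open>The reduced cost of the base displacements\<close>

definition base_cost :: "real \<Rightarrow> real \<Rightarrow> config \<Rightarrow> config \<Rightarrow> real" where
  "base_cost A C K K' =
     A * (\<Sum>i\<in>{1,2,3}. (norm (K i - K' i - (centroid3 K - centroid3 K')))\<^sup>2)
     + C * (norm (centroid3 K - centroid3 K'))\<^sup>2"

lemma base_cost_nonneg: "0 \<le> A \<Longrightarrow> 0 \<le> C \<Longrightarrow> 0 \<le> base_cost A C K K'"
  by (simp add: base_cost_def)

lemma centroid3_diff: "centroid3 K - centroid3 K' = (1/3) *\<^sub>R ((K 1 - K' 1) + (K 2 - K' 2) + (K 3 - K' 3))"
  by (simp add: centroid3_def algebra_simps)

lemma base_cost_collinear: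
  assumes "n \<noteq> 0" and "\<forall>i\<in>{1,2,3}. y i \<bullet> n = k"
  shows "base_cost A C K y = A * centroid_line_sqdist K n
    + A * (\<Sum>i\<in>{1,2,3}. ((K i - y i - (centroid3 K - centroid3 y)) \<bullet> rot90 n)\<^sup>2) / (n \<bullet> n)
    + C * (norm (centroid3 K - centroid3 y))\<^sup>2"
proof -
  define d where "d = centroid3 K - centroid3 y"
  have "centroid3 y \<bullet> n = k"
    using assms(2) by (simp add: centroid3_def inner_add_left)
  then have normal_part: "(K i - y i - d) \<bullet> n = (K i - centroid3 K) \<bullet> n" if "i \<in> {1,2,3}" for i
  proof -
    have "y i \<bullet> n = k" using assms(2) that by blast
    then show ?thesis using \<open>centroid3 y \<bullet> n = k\<close> by (simp add: d_def inner_diff_left)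
  qed
  have "(norm (K i - y i - d))\<^sup>2
      = (((K i - centroid3 K) \<bullet> n)\<^sup>2 + ((K i - y i - d) \<bullet> rot90 n)\<^sup>2) / (n \<bullet> n)"
    if "i \<in> {1,2,3}" for i
    using inner_rot90_sq_sum[of "K i - y i - d" n] normal_part[OF that] assms(1)
    by (simp add: power2_norm_eq_inner field_simps)
  then have "(\<Sum>i\<in>{1,2,3}. (norm (K i - y i - d))\<^sup>2)
      = centroid_line_sqdist K n + (\<Sum>i\<in>{1,2,3}. ((K i - y i - d) \<bullet> rot90 n)\<^sup>2) / (n \<bullet> n)"
    unfolding centroid_line_sqdist_def by (simp add: add_divide_distrib)
  then show ?thesis
    unfolding base_cost_def d_def by (simp add: distrib_left)
qed

lemma base_cost_ge_centroid_line_sqdist: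
  assumes "0 \<le> A" "0 \<le> C" "n \<noteq> 0" "\<forall>i\<in>{1,2,3}. y i \<bullet> n = k"
  shows "A * centroid_line_sqdist K n \<le> base_cost A C K y"
  using assms by (simp add: base_cost_collinear[OF assms(3,4)])

lemma centroid3_pedal: "centroid3 (\<lambda>i. pedal (centroid3 K) v (K i)) = centroid3 K"
proof -
  define g where "g = centroid3 K"
  define c where "c i = ((K i - g) \<bullet> v) / (v \<bullet> v)" for i
  have "(K 1 - g) + (K 2 - g) + (K 3 - g) = 0"
    by (simp add: g_def centroid3_def vec_eq_iff field_simps)
  then have "c 1 + c 2 + c 3 = 0"
    unfolding c_def by (metis add_divide_distrib div_0 inner_add_left inner_zero_left)
  then have "(1/3) *\<^sub>R ((g + c 1 *\<^sub>R v) + (g + c 2 *\<^sub>R v) + (g + c 3 *\<^sub>R v)) = g"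
  proof -
    have "(g + c 1 *\<^sub>R v) + (g + c 2 *\<^sub>R v) + (g + c 3 *\<^sub>R v) = 3 *\<^sub>R g + (c 1 + c 2 + c 3) *\<^sub>R v"
      by (simp add: scaleR_add_left vec_eq_iff)
    with \<open>c 1 + c 2 + c 3 = 0\<close> show ?thesis by simp
  qed
  then show ?thesis
    by (subst centroid3_def) (simp add: pedal_def c_def g_def)
qed

lemma base_cost_pedal:
  assumes "n \<noteq> 0"
  shows "base_cost A C K (\<lambda>i. pedal (centroid3 K) (rot90 n) (K i)) = A * centroid_line_sqdist K n"
proof -
  define P where "P i = pedal (centroid3 K) (rot90 n) (K i)" for i
  have "\<forall>i\<in>{1,2,3}. P i \<bullet> n = centroid3 K \<bullet> n"
    by (simp add: P_def pedal_inner_normal)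
  moreover have "(K i - P i) \<bullet> rot90 n = 0" for i
    using assms by (simp add: P_def pedal_def inner_diff_left inner_add_left)
  ultimately show ?thesis
    using base_cost_collinear[OF assms] centroid3_pedal[of K "rot90 n"]
    unfolding P_def by simp
qed

lemma base_cost_le_centroid_line_sqdistD:
  assumes "0 < A" "0 < C" "n \<noteq> 0" "\<forall>i\<in>{1,2,3}. y i \<bullet> n = k"
    and "base_cost A C K y \<le> A * centroid_line_sqdist K n"
  shows "centroid3 y = centroid3 K" and "\<forall>i\<in>{1,2,3}. (K i - y i) \<bullet> rot90 n = 0"
proof -
  define d where "d = centroid3 K - centroid3 y"
  define r where "r i = ((K i - y i - d) \<bullet> rot90 n)\<^sup>2" for i
  have "A * (\<Sum>i\<in>{1,2,3}. r i) / (n \<bullet> n) + C * (norm d)\<^sup>2 \<le> 0"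
    using assms(5) unfolding base_cost_collinear[OF assms(3,4)] r_def d_def by simp
  moreover have "0 \<le> A * (\<Sum>i\<in>{1,2,3}. r i) / (n \<bullet> n)" "0 \<le> C * (norm d)\<^sup>2"
    using assms(1,2) by (simp_all add: r_def)
  ultimately have "A * (\<Sum>i\<in>{1,2,3}. r i) / (n \<bullet> n) = 0" "C * (norm d)\<^sup>2 = 0"
    by linarith+
  then have "d = 0" and "(\<Sum>i\<in>{1,2,3}. r i) = 0"
    using assms(1-3) by auto
  then show "centroid3 y = centroid3 K" and "\<forall>i\<in>{1,2,3}. (K i - y i) \<bullet> rot90 n = 0"
    using sum_nonneg_eq_0_iff[of "{1,2,3::nat}" r] by (auto simp: d_def r_def)
qed

lemma eq_pedal_if_foot:
  assumes "n \<noteq> 0" "(y - a) \<bullet> n = 0" "(x - y) \<bullet> rot90 n = 0"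
  shows "y = pedal a (rot90 n) x"
proof -
  have "(n \<bullet> n) *\<^sub>R (y - a) = ((y - a) \<bullet> rot90 n) *\<^sub>R rot90 n"
    using vec2_decomp[of n "y - a"] assms(2) by simp
  moreover have "(x - a) \<bullet> rot90 n = (y - a) \<bullet> rot90 n"
    using assms(3) by (simp add: inner_diff_left)
  ultimately have "pedal a (rot90 n) x = a + (1 / (n \<bullet> n)) *\<^sub>R ((n \<bullet> n) *\<^sub>R (y - a))"
    by (simp add: pedal_def)
  then show ?thesis
    using assms(1) by simp
qed

lemma pedal_if_base_cost_le:
  assumes "0 < A" "0 < C" "n \<noteq> 0" "\<forall>i\<in>{1,2,3}. y i \<bullet> n = k"
    and "base_cost A C K y \<le> A * centroid_line_sqdist K n"
  shows "\<forall>i\<in>{1,2,3}. y i = pedal (centroid3 K) (rot90 n) (K i)"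
proof
  fix i :: nat assume i: "i \<in> {1,2,3}"
  note g = base_cost_le_centroid_line_sqdistD(1)[OF assms]
  have "centroid3 y \<bullet> n = k"
    using assms(4) by (simp add: centroid3_def inner_add_left)
  then have "(y i - centroid3 K) \<bullet> n = 0"
    using assms(4) i g by (auto simp: inner_diff_left)
  moreover have "(K i - y i) \<bullet> rot90 n = 0"
    using base_cost_le_centroid_line_sqdistD(2)[OF assms] i by blast
  ultimately show "y i = pedal (centroid3 K) (rot90 n) (K i)"
    by (rule eq_pedal_if_foot[OF assms(3)])
qed

definition reduces_to_base_cost :: "(config \<Rightarrow> config \<Rightarrow> real) \<Rightarrow> real \<Rightarrow> real \<Rightarrow> bool" where
  "reduces_to_base_cost D A C \<longleftrightarrow>
     (\<forall>K K'. base_cost A C K K' \<le> (D K K')\<^sup>2) \<and>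
     (\<forall>K y. \<exists>K'. (\<forall>i\<in>{1,2,3}. K' i = y i) \<and> (D K K')\<^sup>2 = base_cost A C K y)"

lemma closest_collinear_is_pedal:
  assumes red: "reduces_to_base_cost D A C" and "0 < A" "0 < C"
    and nonneg: "\<And>K''. 0 \<le> D K K''"
    and "C_B K' = 0" and min: "\<forall>K''. C_B K'' = 0 \<longrightarrow> D K K' \<le> D K K''"
  shows "\<exists>a v. is_regression_line a v K \<and> (\<forall>i\<in>{1,2,3}. K' i = pedal a v (K i))"
proof -
  obtain n k where n: "n \<noteq> 0" "\<forall>i\<in>{1,2,3}. K' i \<bullet> n = k"
    using \<open>C_B K' = 0\<close> C_B_eq_0_iff by blast
  have upper: "(D K K')\<^sup>2 \<le> A * centroid_line_sqdist K m" if "m \<noteq> 0" for m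
  proof -
    obtain K'' where K'': "\<forall>i\<in>{1,2,3}. K'' i = pedal (centroid3 K) (rot90 m) (K i)"
      "(D K K'')\<^sup>2 = base_cost A C K (\<lambda>i. pedal (centroid3 K) (rot90 m) (K i))"
      using red[unfolded reduces_to_base_cost_def, THEN conjunct2, rule_format,
          where K = K and y = "\<lambda>i. pedal (centroid3 K) (rot90 m) (K i)"] by blast
    have "\<forall>i\<in>{1,2,3}. K'' i \<bullet> m = centroid3 K \<bullet> m"
      using K''(1) by (simp add: pedal_inner_normal)
    then have "C_B K'' = 0"
      using C_B_eq_0_iff that by blast
    then have "(D K K')\<^sup>2 \<le> (D K K'')\<^sup>2"
      using min nonneg by (simp add: power_mono)
    then show ?thesis
      using K''(2) base_cost_pedal[OF that] by simp
  qed
  have lower: "A * centroid_line_sqdist K n \<le> (D K K')\<^sup>2"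
    using base_cost_ge_centroid_line_sqdist[OF _ _ n] assms(2,3) red
    unfolding reduces_to_base_cost_def by (meson less_imp_le order.trans)
  have "is_regression_line (centroid3 K) (rot90 n) K"
  proof (rule is_regression_line_centroid[OF n(1)])
    fix m :: point assume "m \<noteq> 0"
    then have "A * centroid_line_sqdist K n \<le> A * centroid_line_sqdist K m"
      using upper lower by (meson order.trans)
    then show "centroid_line_sqdist K n \<le> centroid_line_sqdist K m"
      using \<open>0 < A\<close> by simp
  qed
  moreover have "\<forall>i\<in>{1,2,3}. K' i = pedal (centroid3 K) (rot90 n) (K i)"
    using red upper[OF n(1)] unfolding reduces_to_base_cost_def
    by (intro pedal_if_base_cost_le[OF assms(2,3) n]) (meson order.trans)
  ultimately show ?thesis by blast
qed

section \<open>Eliminating the platform\<close>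

definition triple_form :: "'a::real_inner \<Rightarrow> 'a \<Rightarrow> 'a \<Rightarrow> real" where
  "triple_form u v w = 3 * ((norm u)\<^sup>2 + (norm v)\<^sup>2 + (norm w)\<^sup>2) + (u \<bullet> v + v \<bullet> w + u \<bullet> w)"

lemma triple_form_nonneg: "0 \<le> triple_form u v w"
proof -
  have "2 * triple_form u v w = 5 * ((norm u)\<^sup>2 + (norm v)\<^sup>2 + (norm w)\<^sup>2) + (norm (u + v + w))\<^sup>2"
    unfolding triple_form_def power2_norm_eq_inner
    by (simp add: inner_add_left inner_add_right inner_commute algebra_simps)
  then show ?thesis by (smt (verit) zero_le_power2)
qed

text \<open>The constants come from the Schur complement of the platform block: for fixed base
  displacements a, b, c the form is smallest exactly when the three residuals r vanish.\<close>

lemma tri_quadratic_decomp: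
  fixes a b c a' b' c' :: "'a::real_inner"
  defines "m \<equiv> (1/3) *\<^sub>R (a + b + c)"
  defines "r x y \<equiv> x + (2/5) *\<^sub>R y - (1/20) *\<^sub>R (a + b + c)"
  shows "(1/7) * ((1/3) * ((norm a)\<^sup>2 + (norm a')\<^sup>2 + a \<bullet> a')
      + (1/3) * ((norm b)\<^sup>2 + (norm b')\<^sup>2 + b \<bullet> b') + (1/3) * ((norm c)\<^sup>2 + (norm c')\<^sup>2 + c \<bullet> c')
      + (1/3) * ((norm a)\<^sup>2 + (norm b)\<^sup>2 + a \<bullet> b) + (1/3) * ((norm b)\<^sup>2 + (norm c)\<^sup>2 + b \<bullet> c)
      + (1/3) * ((norm a)\<^sup>2 + (norm c)\<^sup>2 + a \<bullet> c)
      + (1/6) * ((norm a')\<^sup>2 + (norm b')\<^sup>2 + (norm c')\<^sup>2 + a' \<bullet> c' + a' \<bullet> b' + c' \<bullet> b'))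
    = (23/210) * ((norm (a - m))\<^sup>2 + (norm (b - m))\<^sup>2 + (norm (c - m))\<^sup>2) + (31/56) * (norm m)\<^sup>2
      + (1/42) * triple_form (r a' a) (r b' b) (r c' c)"
  unfolding m_def r_def triple_form_def power2_norm_eq_inner
  by (simp add: inner_add_left inner_add_right inner_diff_left inner_diff_right inner_commute algebra_simps)

lemma seg_quadratic_decomp:
  fixes a b c a' b' c' :: "'a::real_inner"
  defines "m \<equiv> (1/3) *\<^sub>R (a + b + c)"
  defines "r x y \<equiv> x + (1/5) *\<^sub>R y - (1/40) *\<^sub>R (a + b + c)"
  shows "(1/9) * ((1/3) * ((norm a)\<^sup>2 + (norm b)\<^sup>2 + a \<bullet> b)
      + (1/3) * ((norm b)\<^sup>2 + (norm c)\<^sup>2 + b \<bullet> c) + (1/3) * ((norm a)\<^sup>2 + (norm c)\<^sup>2 + a \<bullet> c)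
      + (1/3) * ((norm a)\<^sup>2 + (norm a')\<^sup>2 + a \<bullet> a') + (1/3) * ((norm b)\<^sup>2 + (norm b')\<^sup>2 + b \<bullet> b')
      + (1/3) * ((norm c)\<^sup>2 + (norm c')\<^sup>2 + c \<bullet> c') + (1/3) * ((norm a')\<^sup>2 + (norm b')\<^sup>2 + a' \<bullet> b')
      + (1/3) * ((norm b')\<^sup>2 + (norm c')\<^sup>2 + b' \<bullet> c') + (1/3) * ((norm a')\<^sup>2 + (norm c')\<^sup>2 + a' \<bullet> c'))
    = (4/45) * ((norm (a - m))\<^sup>2 + (norm (b - m))\<^sup>2 + (norm (c - m))\<^sup>2) + (7/16) * (norm m)\<^sup>2
      + (1/27) * triple_form (r a' a) (r b' b) (r c' c)"
  unfolding m_def r_def triple_form_def power2_norm_eq_inner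
  by (simp add: inner_add_left inner_add_right inner_diff_left inner_diff_right inner_commute algebra_simps)

text \<open>Only meaningful for j = 4, 5, 6, whose base partner is j - 3.\<close>

definition platform_residual :: "real \<Rightarrow> real \<Rightarrow> config \<Rightarrow> config \<Rightarrow> nat \<Rightarrow> point" where
  "platform_residual \<alpha> \<beta> K K' j = (K j - K' j) + \<alpha> *\<^sub>R (K (j - 3) - K' (j - 3))
     - \<beta> *\<^sub>R ((K 1 - K' 1) + (K 2 - K' 2) + (K 3 - K' 3))"

definition platform_fit :: "real \<Rightarrow> real \<Rightarrow> config \<Rightarrow> config \<Rightarrow> config" where
  "platform_fit \<alpha> \<beta> K y j = (if j \<in> {1,2,3} then y j
     else K j + \<alpha> *\<^sub>R (K (j - 3) - y (j - 3)) - \<beta> *\<^sub>R ((K 1 - y 1) + (K 2 - y 2) + (K 3 - y 3)))"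

lemma platform_residual_fit: "j \<in> {4,5,6} \<Longrightarrow> platform_residual \<alpha> \<beta> K (platform_fit \<alpha> \<beta> K y) j = 0"
  by (auto simp: platform_residual_def platform_fit_def)

lemma D_tri_eq_sqrt:
  "D_tri K K' = sqrt (base_cost (23/210) (31/56) K K' + (1/42) * triple_form
     (platform_residual (2/5) (1/20) K K' 4) (platform_residual (2/5) (1/20) K K' 5)
     (platform_residual (2/5) (1/20) K K' 6))"
  using tri_quadratic_decomp[where a = "K 1 - K' 1" and b = "K 2 - K' 2" and c = "K 3 - K' 3"
      and a' = "K 4 - K' 4" and b' = "K 5 - K' 5" and c' = "K 6 - K' 6"]
  unfolding D_tri_def I3_def seg_dist2_def tri_dist2_def
  by (simp add: base_cost_def centroid3_diff platform_residual_def add.assoc)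

lemma D_seg_eq_sqrt:
  "D_seg K K' = sqrt (base_cost (4/45) (7/16) K K' + (1/27) * triple_form
     (platform_residual (1/5) (1/40) K K' 4) (platform_residual (1/5) (1/40) K K' 5)
     (platform_residual (1/5) (1/40) K K' 6))"
  using seg_quadratic_decomp[where a = "K 1 - K' 1" and b = "K 2 - K' 2" and c = "K 3 - K' 3"
      and a' = "K 4 - K' 4" and b' = "K 5 - K' 5" and c' = "K 6 - K' 6"]
  unfolding D_seg_def I4_def seg_dist2_def
  by (simp add: base_cost_def centroid3_diff platform_residual_def add.assoc)

lemma reduces_to_base_cost_if_eq_sqrt:
  assumes "0 \<le> A" "0 \<le> C" "0 \<le> c"
    and D: "\<And>K K'. D K K' = sqrt (base_cost A C K K' + c * triple_form (platform_residual \<alpha> \<beta> K K' 4)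
       (platform_residual \<alpha> \<beta> K K' 5) (platform_residual \<alpha> \<beta> K K' 6))"
  shows "reduces_to_base_cost D A C"
  unfolding reduces_to_base_cost_def
proof (intro conjI allI)
  have sq: "(D K K')\<^sup>2 = base_cost A C K K' + c * triple_form (platform_residual \<alpha> \<beta> K K' 4)
       (platform_residual \<alpha> \<beta> K K' 5) (platform_residual \<alpha> \<beta> K K' 6)" for K K'
    using add_nonneg_nonneg[OF base_cost_nonneg[OF assms(1,2)] mult_nonneg_nonneg[OF \<open>0 \<le> c\<close> triple_form_nonneg]]
    unfolding D by simp
  fix K
  show "base_cost A C K K' \<le> (D K K')\<^sup>2" for K'
    unfolding sq using mult_nonneg_nonneg[OF \<open>0 \<le> c\<close> triple_form_nonneg] by simp
  fix y
  have "(D K (platform_fit \<alpha> \<beta> K y))\<^sup>2 = base_cost A C K y"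
    unfolding sq by (simp add: platform_residual_fit triple_form_def)
      (simp add: base_cost_def centroid3_def platform_fit_def)
  moreover have "\<forall>i\<in>{1,2,3}. platform_fit \<alpha> \<beta> K y i = y i"
    by (simp add: platform_fit_def)
  ultimately show "\<exists>K'. (\<forall>i\<in>{1,2,3}. K' i = y i) \<and> (D K K')\<^sup>2 = base_cost A C K y"
    by blast
qed

lemma reduces_to_base_cost_D_tri: "reduces_to_base_cost D_tri (23/210) (31/56)"
  by (rule reduces_to_base_cost_if_eq_sqrt[OF _ _ _ D_tri_eq_sqrt]) simp_all

lemma reduces_to_base_cost_D_seg: "reduces_to_base_cost D_seg (4/45) (7/16)"
  by (rule reduces_to_base_cost_if_eq_sqrt[OF _ _ _ D_seg_eq_sqrt]) simp_all

section \<open>Independence of the pose\<close>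

lemma D_tri_cong_displacement: "(\<And>i. K i - K' i = L i - L' i) \<Longrightarrow> D_tri K K' = D_tri L L'"
  by (simp add: D_tri_def seg_dist2_def tri_dist2_def)

lemma D_seg_cong_displacement: "(\<And>i. K i - K' i = L i - L' i) \<Longrightarrow> D_seg K K' = D_seg L L'"
  by (simp add: D_seg_def seg_dist2_def)

lemma INF_collinear_cong_base:
  fixes D :: "config \<Rightarrow> config \<Rightarrow> real"
  assumes D: "\<And>K K' L L'. (\<And>i. K i - K' i = L i - L' i) \<Longrightarrow> D K K' = D L L'"
    and base: "\<And>i. i \<in> {1,2,3} \<Longrightarrow> K i = L i"
  shows "(INF K'\<in>{K'. C_B K' = 0}. D K K') = (INF K'\<in>{K'. C_B K' = 0}. D L K')"
proof -
  define shift where "shift K' = (\<lambda>i. K' i - K i + L i)" for K'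
  have C_B_shift: "C_B (shift K') = C_B K'" for K'
    by (rule C_B_cong_base) (simp add: shift_def base)
  have shift_image: "shift ` {K'. C_B K' = 0} = {K'. C_B K' = 0}"
  proof (intro equalityI subsetI)
    fix K' assume "K' \<in> {K'. C_B K' = 0}"
    moreover have "K' = shift (\<lambda>i. K' i + K i - L i)" by (simp add: shift_def)
    ultimately show "K' \<in> shift ` {K'. C_B K' = 0}"
      using C_B_shift by (metis (mono_tags, lifting) image_eqI mem_Collect_eq)
  qed (auto simp: C_B_shift)
  have "D K K' = D L (shift K')" for K'
    by (rule D) (simp add: shift_def)
  then have "(INF K'\<in>{K'. C_B K' = 0}. D K K') = (INF K'\<in>shift ` {K'. C_B K' = 0}. D L K')"
    by (simp add: image_image)
  also have "\<dots> = (INF K'\<in>{K'. C_B K' = 0}. D L K')"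
    using shift_image by simp
  finally show ?thesis .
qed

lemma is_regression_line_cong_base:
  "(\<And>i. i \<in> {1,2,3} \<Longrightarrow> K i = L i) \<Longrightarrow> is_regression_line a v K \<longleftrightarrow> is_regression_line a v L"
  by (simp add: is_regression_line_def)

lemma rpr_config_base: "i \<in> {1,2,3} \<Longrightarrow> rpr_config b p R t i = b i"
  by (simp add: rpr_config_def)

theorem theorem2:
  fixes b p :: config and R R2 :: "real^2^2" and t t2 :: point
    and D :: "config \<Rightarrow> config \<Rightarrow> real" and K' :: config
  assumes "D = D_tri \<or> D = D_seg"
    and "R \<in> SO2" and "R2 \<in> SO2"
  shows "(C_B K' = 0 \<and> (\<forall>K''. C_B K'' = 0 \<longrightarrow> D (rpr_config b p R t) K' \<le> D (rpr_config b p R t) K'')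
           \<longrightarrow> (\<exists>a v. is_regression_line a v b \<and> (\<forall>i\<in>{1,2,3::nat}. K' i = pedal a v (b i))))
       \<and> (INF K''\<in>{K''. C_B K'' = 0}. D (rpr_config b p R t) K'')
           = (INF K''\<in>{K''. C_B K'' = 0}. D (rpr_config b p R2 t2) K'')"
proof (intro conjI impI)
  obtain A C where "0 < A" "0 < C" "reduces_to_base_cost D A C"
    using assms(1) reduces_to_base_cost_D_tri reduces_to_base_cost_D_seg
    by (metis divide_pos_pos zero_less_numeral)
  moreover have "0 \<le> D K K''" for K K''
    using assms(1) by (auto simp: D_tri_eq_sqrt D_seg_eq_sqrt base_cost_nonneg triple_form_nonneg)
  moreover assume "C_B K' = 0 \<and> (\<forall>K''. C_B K'' = 0 \<longrightarrow> D (rpr_config b p R t) K' \<le> D (rpr_config b p R t) K'')"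
  ultimately obtain a v where "is_regression_line a v (rpr_config b p R t)"
      "\<forall>i\<in>{1,2,3}. K' i = pedal a v (rpr_config b p R t i)"
    using closest_collinear_is_pedal by blast
  then show "\<exists>a v. is_regression_line a v b \<and> (\<forall>i\<in>{1,2,3::nat}. K' i = pedal a v (b i))"
    using is_regression_line_cong_base[OF rpr_config_base] rpr_config_base by auto
next
  have "D K K' = D L L'" if "\<And>i. K i - K' i = L i - L' i" for K K' L L'
    using assms(1) that by (auto intro: D_tri_cong_displacement D_seg_cong_displacement)
  then show "(INF K''\<in>{K''. C_B K'' = 0}. D (rpr_config b p R t) K'')
      = (INF K''\<in>{K''. C_B K'' = 0}. D (rpr_config b p R2 t2) K'')"
    by (rule INF_collinear_cong_base) (auto simp: rpr_config_base)
qed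

end
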